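(* Let $G$ be a finite group and let $G=G_+G_-$ and $G=G_+'G_-$ be two unique factorizations with the same subgroup $G_-$. Let $\sigma:G_+\to G_-$ be the map with $G_+'=\{\sigma(u)u: u\in G_+\}$ (such a map exists and is unique). Define the linear map $\phi:H(G;G_+',G_-)\to H(G;G_+,G_-)$ by $\phi\{\sigma(u)ux\}'=\{ux\}$ for $u\in G_+$, $x\in G_-$, and \[ T=\sum_{u,v\in G_+}\{u\,\sigma(v)\}\otimes\{v\}\in H(G;G_+,G_-)\otimes H(G;G_+,G_-). \] Then $(\phi,T)$ is a quasi-isomorphism of Hopf algebras from $H(G;G_+',G_-)$ to $H(G;G_+,G_-)$.
   Context: A unique factorization $G=K G_-$ consists of subgroups $K,G_-$ such that every $g\in G$ is uniquely $g=g_Kg_-$ with $g_K\in K$, $g_-\in G_-$; for $u\in K$, $x\in G_-$ define ${}^u x\in G_-$, $u^x\in K$ by $ux=({}^u x)(u^x)$. $H(G;K,G_-)$ is the complex vector space with basis $G$ and Hopf algebra structure: $\{g\}\{h\}=\delta_{g_K^{\,g_-},\,h_K}\{g h_-\}$; unit $1=\sum_{u\in K}\{u\}$; $\Delta\{g\}=\sum_{h\in K}\{g_Kh^{-1}({}^{h}g_-)\}\otimes\{h g_-\}$; $\varepsilon\{g\}=\delta_{g_K,e}$; $S\{g\}=\{g^{-1}\}$. The basis element $g$ is written $\{g\}$ in $H(G;G_+,G_-)$ and $\{g\}'$ in $H(G;G_+',G_-)$. A quasi-isomorphism of Hopf algebras from $H'$ to $H$ is a pair $(\phi,T)$ where $\phi:H'\to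 H$ is an algebra isomorphism and $T\in H\otimes H$ is invertible such that $(\phi\otimes\phi)\Delta'(a)=T\,\Delta(\phi(a))\,T^{-1}$ for all $a\in H'$, $(T\otimes 1)(\Delta\otimes\mathrm{id})T=(1\otimes T)(\mathrm{id}\otimes\Delta)T$, and $(\varepsilon\otimes\mathrm{id})T=(\mathrm{id}\otimes\varepsilon)T=1$. *)

theory Defs
  imports "HOL-Algebra.Group" "HOL-Algebra.Coset" Complex_Main
begin

definition unique_factorization :: "('g,'b) monoid_scheme \<Rightarrow> 'g set \<Rightarrow> 'g set \<Rightarrow> bool" where
  "unique_factorization G K M \<longleftrightarrow> subgroup K G \<and> subgroup M G \<and>
     (\<forall>g\<in>carrier G. \<exists>!p. fst p \<in> K \<and> snd p \<in> M \<and> g = fst p \<otimes>\<^bsub>G\<^esub> snd p)"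

definition fK :: "('g,'b) monoid_scheme \<Rightarrow> 'g set \<Rightarrow> 'g set \<Rightarrow> 'g \<Rightarrow> 'g" where
  "fK G K M g = (THE u. u \<in> K \<and> (\<exists>x\<in>M. g = u \<otimes>\<^bsub>G\<^esub> x))"
definition fM :: "('g,'b) monoid_scheme \<Rightarrow> 'g set \<Rightarrow> 'g set \<Rightarrow> 'g \<Rightarrow> 'g" where
  "fM G K M g = (THE x. x \<in> M \<and> (\<exists>u\<in>K. g = u \<otimes>\<^bsub>G\<^esub> x))"

definition actM :: "('g,'b) monoid_scheme \<Rightarrow> 'g set \<Rightarrow> 'g set \<Rightarrow> 'g \<Rightarrow> 'g \<Rightarrow> 'g" where
  "actM G K M u x = (THE y. y \<in> M \<and> (\<exists>v\<in>K. u \<otimes>\<^bsub>G\<^esub> x = y \<otimes>\<^bsub>G\<^esub> v))"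
definition actK :: "('g,'b) monoid_scheme \<Rightarrow> 'g set \<Rightarrow> 'g set \<Rightarrow> 'g \<Rightarrow> 'g \<Rightarrow> 'g" where
  "actK G K M u x = (THE v. v \<in> K \<and> (\<exists>y\<in>M. u \<otimes>\<^bsub>G\<^esub> x = y \<otimes>\<^bsub>G\<^esub> v))"

text \<open>Elements of H(G;K,M) are functions carrier G -> complex (coefficients w.r.t. the basis G);
  elements of H\<otimes>H are functions on pairs, elements of H\<otimes>H\<otimes>H functions on triples.\<close>
definition Hsp :: "('g,'b) monoid_scheme \<Rightarrow> ('g \<Rightarrow> complex) set" where
  "Hsp G = {a. \<forall>g. g \<notin> carrier G \<longrightarrow> a g = 0}"

definition bas :: "'g \<Rightarrow> 'g \<Rightarrow> complex" where
  "bas g = (\<lambda>z. if z = g then 1 else 0)"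

definition mc :: "('g,'b) monoid_scheme \<Rightarrow> 'g set \<Rightarrow> 'g set \<Rightarrow> 'g \<Rightarrow> 'g \<Rightarrow> 'g \<Rightarrow> complex" where
  "mc G K M g h z = (if actK G K M (fK G K M g) (fM G K M g) = fK G K M h
                        \<and> z = g \<otimes>\<^bsub>G\<^esub> fM G K M h then 1 else 0)"

definition hmul :: "('g,'b) monoid_scheme \<Rightarrow> 'g set \<Rightarrow> 'g set \<Rightarrow> ('g \<Rightarrow> complex) \<Rightarrow> ('g \<Rightarrow> complex) \<Rightarrow> 'g \<Rightarrow> complex" where
  "hmul G K M a b = (\<lambda>z. \<Sum>g\<in>carrier G. \<Sum>h\<in>carrier G. a g * b h * mc G K M g h z)"

definition hone :: "'g set \<Rightarrow> 'g \<Rightarrow> complex" where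
  "hone K = (\<lambda>z. if z \<in> K then 1 else 0)"

definition dc :: "('g,'b) monoid_scheme \<Rightarrow> 'g set \<Rightarrow> 'g set \<Rightarrow> 'g \<Rightarrow> 'g \<Rightarrow> 'g \<Rightarrow> complex" where
  "dc G K M g z w = (\<Sum>h\<in>K. if z = fK G K M g \<otimes>\<^bsub>G\<^esub> inv\<^bsub>G\<^esub> h \<otimes>\<^bsub>G\<^esub> actM G K M h (fM G K M g)
                                \<and> w = h \<otimes>\<^bsub>G\<^esub> fM G K M g then 1 else 0)"

definition hDelta :: "('g,'b) monoid_scheme \<Rightarrow> 'g set \<Rightarrow> 'g set \<Rightarrow> ('g \<Rightarrow> complex) \<Rightarrow> 'g \<times> 'g \<Rightarrow> complex" where
  "hDelta G K M a = (\<lambda>(z,w). \<Sum>g\<in>carrier G. a g * dc G K M g z w)"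

definition ec :: "('g,'b) monoid_scheme \<Rightarrow> 'g set \<Rightarrow> 'g set \<Rightarrow> 'g \<Rightarrow> complex" where
  "ec G K M g = (if fK G K M g = \<one>\<^bsub>G\<^esub> then 1 else 0)"

definition hmul2 :: "('g,'b) monoid_scheme \<Rightarrow> 'g set \<Rightarrow> 'g set \<Rightarrow> ('g\<times>'g \<Rightarrow> complex) \<Rightarrow> ('g\<times>'g \<Rightarrow> complex) \<Rightarrow> 'g\<times>'g \<Rightarrow> complex" where
  "hmul2 G K M A B = (\<lambda>(z1,z2). \<Sum>(g1,g2)\<in>carrier G \<times> carrier G. \<Sum>(h1,h2)\<in>carrier G \<times> carrier G.
        A (g1,g2) * B (h1,h2) * mc G K M g1 h1 z1 * mc G K M g2 h2 z2)"

definition hone2 :: "'g set \<Rightarrow> 'g\<times>'g \<Rightarrow> complex" where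
  "hone2 K = (\<lambda>(z1,z2). hone K z1 * hone K z2)"

definition hmul3 :: "('g,'b) monoid_scheme \<Rightarrow> 'g set \<Rightarrow> 'g set \<Rightarrow> ('g\<times>'g\<times>'g \<Rightarrow> complex) \<Rightarrow> ('g\<times>'g\<times>'g \<Rightarrow> complex) \<Rightarrow> 'g\<times>'g\<times>'g \<Rightarrow> complex" where
  "hmul3 G K M A B = (\<lambda>(z1,z2,z3). \<Sum>(g1,g2,g3)\<in>carrier G \<times> carrier G \<times> carrier G.
        \<Sum>(h1,h2,h3)\<in>carrier G \<times> carrier G \<times> carrier G.
        A (g1,g2,g3) * B (h1,h2,h3) * mc G K M g1 h1 z1 * mc G K M g2 h2 z2 * mc G K M g3 h3 z3)"

definition tens_T1 :: "'g set \<Rightarrow> ('g\<times>'g \<Rightarrow> complex) \<Rightarrow> 'g\<times>'g\<times>'g \<Rightarrow> complex" where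
  "tens_T1 K T = (\<lambda>(a,b,c). T (a,b) * hone K c)"
definition tens_1T :: "'g set \<Rightarrow> ('g\<times>'g \<Rightarrow> complex) \<Rightarrow> 'g\<times>'g\<times>'g \<Rightarrow> complex" where
  "tens_1T K T = (\<lambda>(a,b,c). hone K a * T (b,c))"
definition Delta_id :: "('g,'b) monoid_scheme \<Rightarrow> 'g set \<Rightarrow> 'g set \<Rightarrow> ('g\<times>'g \<Rightarrow> complex) \<Rightarrow> 'g\<times>'g\<times>'g \<Rightarrow> complex" where
  "Delta_id G K M T = (\<lambda>(z,w,y). \<Sum>g\<in>carrier G. T (g,y) * dc G K M g z w)"
definition id_Delta :: "('g,'b) monoid_scheme \<Rightarrow> 'g set \<Rightarrow> 'g set \<Rightarrow> ('g\<times>'g \<Rightarrow> complex) \<Rightarrow> 'g\<times>'g\<times>'g \<Rightarrow> complex" where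
  "id_Delta G K M T = (\<lambda>(y,z,w). \<Sum>g\<in>carrier G. T (y,g) * dc G K M g z w)"
definition eps_id :: "('g,'b) monoid_scheme \<Rightarrow> 'g set \<Rightarrow> 'g set \<Rightarrow> ('g\<times>'g \<Rightarrow> complex) \<Rightarrow> 'g \<Rightarrow> complex" where
  "eps_id G K M T = (\<lambda>y. \<Sum>g\<in>carrier G. ec G K M g * T (g,y))"
definition id_eps :: "('g,'b) monoid_scheme \<Rightarrow> 'g set \<Rightarrow> 'g set \<Rightarrow> ('g\<times>'g \<Rightarrow> complex) \<Rightarrow> 'g \<Rightarrow> complex" where
  "id_eps G K M T = (\<lambda>y. \<Sum>g\<in>carrier G. T (y,g) * ec G K M g)"

definition tens_map :: "('g,'b) monoid_scheme \<Rightarrow> (('g \<Rightarrow> complex) \<Rightarrow> ('g \<Rightarrow> complex)) \<Rightarrow> ('g\<times>'g \<Rightarrow> complex) \<Rightarrow> 'g\<times>'g \<Rightarrow> complex" where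
  "tens_map G phi A = (\<lambda>(z,w). \<Sum>(g,h)\<in>carrier G \<times> carrier G. A (g,h) * phi (bas g) z * phi (bas h) w)"

definition alg_iso :: "('g,'b) monoid_scheme \<Rightarrow> 'g set \<Rightarrow> 'g set \<Rightarrow> 'g set \<Rightarrow> (('g \<Rightarrow> complex) \<Rightarrow> ('g \<Rightarrow> complex)) \<Rightarrow> bool" where
  "alg_iso G K' K M phi \<longleftrightarrow>
     bij_betw phi (Hsp G) (Hsp G) \<and>
     (\<forall>a\<in>Hsp G. \<forall>b\<in>Hsp G. phi (\<lambda>z. a z + b z) = (\<lambda>z. phi a z + phi b z)) \<and>
     (\<forall>c. \<forall>a\<in>Hsp G. phi (\<lambda>z. c * a z) = (\<lambda>z. c * phi a z)) \<and>
     (\<forall>a\<in>Hsp G. \<forall>b\<in>Hsp G. phi (hmul G K' M a b) = hmul G K M (phi a) (phi b)) \<and>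
     phi (hone K') = hone K"

definition quasi_iso :: "('g,'b) monoid_scheme \<Rightarrow> 'g set \<Rightarrow> 'g set \<Rightarrow> 'g set \<Rightarrow> (('g \<Rightarrow> complex) \<Rightarrow> ('g \<Rightarrow> complex)) \<Rightarrow> ('g\<times>'g \<Rightarrow> complex) \<Rightarrow> bool" where
  "quasi_iso G K' K M phi T \<longleftrightarrow>
     alg_iso G K' K M phi \<and>
     (\<exists>Ti. hmul2 G K M T Ti = hone2 K \<and> hmul2 G K M Ti T = hone2 K \<and>
        (\<forall>a\<in>Hsp G. tens_map G phi (hDelta G K' M a) = hmul2 G K M (hmul2 G K M T (hDelta G K M (phi a))) Ti)) \<and>
     hmul3 G K M (tens_T1 K T) (Delta_id G K M T) = hmul3 G K M (tens_1T K T) (id_Delta G K M T) \<and>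
     eps_id G K M T = hone K \<and> id_eps G K M T = hone K"

definition phi_sigma :: "('g,'b) monoid_scheme \<Rightarrow> 'g set \<Rightarrow> 'g set \<Rightarrow> ('g \<Rightarrow> 'g) \<Rightarrow> ('g \<Rightarrow> complex) \<Rightarrow> 'g \<Rightarrow> complex" where
  "phi_sigma G K M \<sigma> a = (\<lambda>z. \<Sum>u\<in>K. \<Sum>x\<in>M. if z = u \<otimes>\<^bsub>G\<^esub> x then a (\<sigma> u \<otimes>\<^bsub>G\<^esub> u \<otimes>\<^bsub>G\<^esub> x) else 0)"

definition T_sigma :: "('g,'b) monoid_scheme \<Rightarrow> 'g set \<Rightarrow> ('g \<Rightarrow> 'g) \<Rightarrow> 'g\<times>'g \<Rightarrow> complex" where
  "T_sigma G K \<sigma> = (\<lambda>(z,w). \<Sum>u\<in>K. \<Sum>v\<in>K. if z = u \<otimes>\<^bsub>G\<^esub> \<sigma> v \<and> w = v then 1 else 0)"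

end

(*
  Since K' = {sigma(u) u}, the twist u |-> sigma(u) u is a bijection K -> K', and u x |-> sigma(u) u x
  (u in K, x in M) is a bijection of G carrying the factorization G = K M to G = K' M; phi is
  composition with it. The right action of M on K' is transported from K, (sigma(u) u)^x = sigma(u^x) u^x,
  and closedness of K' under multiplication amounts to the cocycle identity
  sigma(a) (^a sigma(b)) = sigma(a^sigma(b) b).
  Each axiom of a quasi-isomorphism, once both sides are expanded in the basis G, becomes an
  equality of two formal sums of basis elements. The index sets are matched by explicit
  bijections, and the cocycle identity makes the matched basis elements agree.
*)
theory Submission
  imports Defs
begin

section \<open>Formal linear combinations of basis elements\<close>

text \<open>\<open>lcomb I c f\<close> is the element \<open>\<Sum>\<^sub>i\<^sub>\<in>\<^sub>I c i {f i}\<close>; the \<open>f i\<close> need not be distinct.\<close>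

definition lcomb :: "'i set \<Rightarrow> ('i \<Rightarrow> complex) \<Rightarrow> ('i \<Rightarrow> 'p) \<Rightarrow> 'p \<Rightarrow> complex" where
  "lcomb I c f = (\<lambda>p. \<Sum>i\<in>I. if p = f i then c i else 0)"

lemma lcomb_cong:
  "I = J \<Longrightarrow> (\<And>i. i \<in> I \<Longrightarrow> c i = d i) \<Longrightarrow> (\<And>i. i \<in> I \<Longrightarrow> f i = g i) \<Longrightarrow> lcomb I c f = lcomb J d g"
  unfolding lcomb_def by (auto intro!: ext sum.cong)

lemma lcomb_reindex_bij:
  assumes "bij_betw h I J" "\<And>i. i \<in> I \<Longrightarrow> d (h i) = c i" "\<And>i. i \<in> I \<Longrightarrow> g (h i) = f i"
  shows "lcomb I c f = lcomb J d g"
proof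
  fix p
  have "lcomb J d g p = (\<Sum>i\<in>I. if p = g (h i) then d (h i) else 0)"
    unfolding lcomb_def using sum.reindex_bij_betw[OF assms(1), of "\<lambda>j. if p = g j then d j else 0"]
    by simp
  also have "\<dots> = lcomb I c f p" unfolding lcomb_def using assms by (intro sum.cong) auto
  finally show "lcomb I c f p = lcomb J d g p" by simp
qed

lemma lcomb_reindex:
  assumes "\<And>i. i \<in> I \<Longrightarrow> h i \<in> J" "\<And>j. j \<in> J \<Longrightarrow> p j \<in> I"
    "\<And>j. j \<in> J \<Longrightarrow> h (p j) = j" "\<And>i. i \<in> I \<Longrightarrow> p (h i) = i"
    "\<And>i. i \<in> I \<Longrightarrow> d (h i) = c i" "\<And>i. i \<in> I \<Longrightarrow> g (h i) = f i"
  shows "lcomb I c f = lcomb J d g"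
proof (rule lcomb_reindex_bij[of h])
  show "bij_betw h I J" by (rule bij_betw_byWitness[of I p]) (use assms in auto)
qed (use assms in auto)

lemma lcomb_if_pair:
  assumes "finite I" "finite J"
  shows "lcomb (I\<times>J) (\<lambda>(i,j). if P i j then c i j else 0) f = lcomb {(i,j)\<in>I\<times>J. P i j} (\<lambda>(i,j). c i j) f"
proof -
  have "{(i,j)\<in>I\<times>J. P i j} = {x\<in>I\<times>J. case x of (i,j) \<Rightarrow> P i j}" by auto
  then show ?thesis unfolding lcomb_def using assms
    by (auto simp: sum.inter_filter intro!: ext sum.cong)
qed

lemma lcomb_Times: "lcomb (I \<times> J) c f = (\<lambda>p. \<Sum>i\<in>I. \<Sum>j\<in>J. if p = f (i,j) then c (i,j) else 0)"
  unfolding lcomb_def by (simp add: sum.cartesian_product)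

lemma lcomb_at_pair_fst:
  "lcomb I c f (g,y) = lcomb I (\<lambda>i. if snd (f i) = y then c i else 0) (\<lambda>i. fst (f i)) g"
  unfolding lcomb_def by (intro sum.cong) (auto simp: prod_eq_iff)

lemma lcomb_at_pair_snd:
  "lcomb I c f (y,g) = lcomb I (\<lambda>i. if fst (f i) = y then c i else 0) (\<lambda>i. snd (f i)) g"
  unfolding lcomb_def by (intro sum.cong) (auto simp: prod_eq_iff)

lemma sum_lcomb_mult:
  assumes "finite P" "finite I" "f ` I \<subseteq> P"
  shows "(\<Sum>p\<in>P. lcomb I c f p * h p) = (\<Sum>i\<in>I. c i * h (f i))"
proof -
  have "(\<Sum>p\<in>P. lcomb I c f p * h p) = (\<Sum>p\<in>P. \<Sum>i\<in>I. (if p = f i then c i * h p else 0))"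
    unfolding lcomb_def by (auto simp: sum_distrib_right intro!: sum.cong)
  also have "\<dots> = (\<Sum>i\<in>I. \<Sum>p\<in>P. (if p = f i then c i * h p else 0))"
    by (rule sum.swap)
  also have "\<dots> = (\<Sum>i\<in>I. c i * h (f i))"
    using assms by (intro sum.cong) (auto simp: sum.delta')
  finally show ?thesis .
qed

lemma sum_sum_lcomb_mult:
  assumes "finite P" "finite Q" "finite I" "finite J" "f ` I \<subseteq> P" "g ` J \<subseteq> Q"
  shows "(\<Sum>p\<in>P. \<Sum>q\<in>Q. lcomb I c f p * lcomb J d g q * m p q) = (\<Sum>i\<in>I. \<Sum>j\<in>J. c i * d j * m (f i) (g j))"
proof -
  have "(\<Sum>p\<in>P. \<Sum>q\<in>Q. lcomb I c f p * lcomb J d g q * m p q)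
      = (\<Sum>p\<in>P. lcomb I c f p * (\<Sum>q\<in>Q. lcomb J d g q * m p q))"
    by (simp add: sum_distrib_left mult.assoc)
  also have "\<dots> = (\<Sum>p\<in>P. lcomb I c f p * (\<Sum>j\<in>J. d j * m p (g j)))"
    using assms by (simp add: sum_lcomb_mult)
  also have "\<dots> = (\<Sum>i\<in>I. c i * (\<Sum>j\<in>J. d j * m (f i) (g j)))"
    using assms by (simp add: sum_lcomb_mult)
  also have "\<dots> = (\<Sum>i\<in>I. \<Sum>j\<in>J. c i * d j * m (f i) (g j))"
    by (simp add: sum_distrib_left mult.assoc)
  finally show ?thesis .
qed

definition bas_mult_ok :: "('g,'b) monoid_scheme \<Rightarrow> 'g set \<Rightarrow> 'g set \<Rightarrow> 'g \<Rightarrow> 'g \<Rightarrow> bool" where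
  "bas_mult_ok G K M g h \<longleftrightarrow> actK G K M (fK G K M g) (fM G K M g) = fK G K M h"

definition bas_mult :: "('g,'b) monoid_scheme \<Rightarrow> 'g set \<Rightarrow> 'g set \<Rightarrow> 'g \<Rightarrow> 'g \<Rightarrow> 'g" where
  "bas_mult G K M g h = g \<otimes>\<^bsub>G\<^esub> fM G K M h"

definition bas_mult_ok2 :: "('g,'b) monoid_scheme \<Rightarrow> 'g set \<Rightarrow> 'g set \<Rightarrow> 'g\<times>'g \<Rightarrow> 'g\<times>'g \<Rightarrow> bool" where
  "bas_mult_ok2 G K M p q \<longleftrightarrow> bas_mult_ok G K M (fst p) (fst q) \<and> bas_mult_ok G K M (snd p) (snd q)"

definition bas_mult2 :: "('g,'b) monoid_scheme \<Rightarrow> 'g set \<Rightarrow> 'g set \<Rightarrow> 'g\<times>'g \<Rightarrow> 'g\<times>'g \<Rightarrow> 'g\<times>'g" where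
  "bas_mult2 G K M p q = (bas_mult G K M (fst p) (fst q), bas_mult G K M (snd p) (snd q))"

lemma mc_eq_bas_mult: "mc G K M g h z = (if bas_mult_ok G K M g h \<and> z = bas_mult G K M g h then 1 else 0)"
  unfolding mc_def bas_mult_ok_def bas_mult_def by simp

lemma hmul_lcomb:
  fixes G :: "('g,'b) monoid_scheme"
  assumes "finite (carrier G)" "finite I" "finite J" "f ` I \<subseteq> carrier G" "g ` J \<subseteq> carrier G"
  shows "hmul G K M (lcomb I c f) (lcomb J d g) =
     lcomb {(i,j)\<in>I\<times>J. bas_mult_ok G K M (f i) (g j)} (\<lambda>(i,j). c i * d j) (\<lambda>(i,j). bas_mult G K M (f i) (g j))"
proof
  fix z
  have "hmul G K M (lcomb I c f) (lcomb J d g) z = (\<Sum>i\<in>I. \<Sum>j\<in>J. c i * d j * mc G K M (f i) (g j) z)"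
    unfolding hmul_def using assms by (simp add: sum_sum_lcomb_mult)
  also have "\<dots> = lcomb (I\<times>J) (\<lambda>(i,j). if bas_mult_ok G K M (f i) (g j) then c i * d j else 0)
      (\<lambda>(i,j). bas_mult G K M (f i) (g j)) z"
    unfolding lcomb_Times mc_eq_bas_mult by (auto intro!: sum.cong)
  also have "\<dots> = lcomb {(i,j)\<in>I\<times>J. bas_mult_ok G K M (f i) (g j)} (\<lambda>(i,j). c i * d j)
      (\<lambda>(i,j). bas_mult G K M (f i) (g j)) z"
    using assms by (subst lcomb_if_pair[symmetric]) (auto simp: case_prod_beta')
  finally show "hmul G K M (lcomb I c f) (lcomb J d g) z = \<dots>" .
qed

lemma hmul2_lcomb:
  fixes G :: "('g,'b) monoid_scheme"
  assumes "finite (carrier G)" "finite I" "finite J"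
    "f ` I \<subseteq> carrier G \<times> carrier G" "g ` J \<subseteq> carrier G \<times> carrier G"
  shows "hmul2 G K M (lcomb I c f) (lcomb J d g) =
     lcomb {(i,j)\<in>I\<times>J. bas_mult_ok2 G K M (f i) (g j)} (\<lambda>(i,j). c i * d j) (\<lambda>(i,j). bas_mult2 G K M (f i) (g j))"
proof
  fix z :: "'g \<times> 'g"
  obtain z1 z2 where z: "z = (z1,z2)" by fastforce
  have "hmul2 G K M (lcomb I c f) (lcomb J d g) z = (\<Sum>p\<in>carrier G \<times> carrier G. \<Sum>q\<in>carrier G \<times> carrier G.
      lcomb I c f p * lcomb J d g q * (mc G K M (fst p) (fst q) z1 * mc G K M (snd p) (snd q) z2))"
    unfolding hmul2_def z by (simp add: case_prod_beta' mult.assoc)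
  also have "\<dots> = (\<Sum>i\<in>I. \<Sum>j\<in>J. c i * d j *
      (mc G K M (fst (f i)) (fst (g j)) z1 * mc G K M (snd (f i)) (snd (g j)) z2))"
    using assms by (subst sum_sum_lcomb_mult) auto
  also have "\<dots> = lcomb (I\<times>J) (\<lambda>(i,j). if bas_mult_ok2 G K M (f i) (g j) then c i * d j else 0)
      (\<lambda>(i,j). bas_mult2 G K M (f i) (g j)) z"
    unfolding lcomb_Times mc_eq_bas_mult bas_mult_ok2_def bas_mult2_def z by (auto intro!: sum.cong)
  also have "\<dots> = lcomb {(i,j)\<in>I\<times>J. bas_mult_ok2 G K M (f i) (g j)} (\<lambda>(i,j). c i * d j)
      (\<lambda>(i,j). bas_mult2 G K M (f i) (g j)) z"
    using assms by (subst lcomb_if_pair[symmetric]) (auto simp: case_prod_beta')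
  finally show "hmul2 G K M (lcomb I c f) (lcomb J d g) z = \<dots>" .
qed

lemma hmul3_lcomb:
  fixes G :: "('g,'b) monoid_scheme"
  assumes "finite (carrier G)" "finite I" "finite J"
    "f ` I \<subseteq> carrier G \<times> carrier G \<times> carrier G" "g ` J \<subseteq> carrier G \<times> carrier G \<times> carrier G"
  shows "hmul3 G K M (lcomb I c f) (lcomb J d g) =
     lcomb {(i,j)\<in>I\<times>J. bas_mult_ok G K M (fst (f i)) (fst (g j))
          \<and> bas_mult_ok2 G K M (snd (f i)) (snd (g j))} (\<lambda>(i,j). c i * d j)
        (\<lambda>(i,j). (bas_mult G K M (fst (f i)) (fst (g j)), bas_mult2 G K M (snd (f i)) (snd (g j))))"
proof
  fix z :: "'g \<times> 'g \<times> 'g"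
  obtain z1 z2 z3 where z: "z = (z1,z2,z3)" by (cases z) fastforce
  have "hmul3 G K M (lcomb I c f) (lcomb J d g) z =
      (\<Sum>p\<in>carrier G \<times> carrier G \<times> carrier G. \<Sum>q\<in>carrier G \<times> carrier G \<times> carrier G.
        lcomb I c f p * lcomb J d g q * (mc G K M (fst p) (fst q) z1
          * mc G K M (fst (snd p)) (fst (snd q)) z2 * mc G K M (snd (snd p)) (snd (snd q)) z3))"
    unfolding hmul3_def z by (simp add: case_prod_beta' mult.assoc)
  also have "\<dots> = (\<Sum>i\<in>I. \<Sum>j\<in>J. c i * d j * (mc G K M (fst (f i)) (fst (g j)) z1
      * mc G K M (fst (snd (f i))) (fst (snd (g j))) z2 * mc G K M (snd (snd (f i))) (snd (snd (g j))) z3))"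
    using assms by (subst sum_sum_lcomb_mult) auto
  also have "\<dots> = lcomb (I\<times>J) (\<lambda>(i,j). if bas_mult_ok G K M (fst (f i)) (fst (g j))
          \<and> bas_mult_ok2 G K M (snd (f i)) (snd (g j)) then c i * d j else 0)
        (\<lambda>(i,j). (bas_mult G K M (fst (f i)) (fst (g j)), bas_mult2 G K M (snd (f i)) (snd (g j)))) z"
    unfolding lcomb_Times mc_eq_bas_mult bas_mult_ok2_def bas_mult2_def z by (auto intro!: sum.cong)
  also have "\<dots> = lcomb {(i,j)\<in>I\<times>J. bas_mult_ok G K M (fst (f i)) (fst (g j))
          \<and> bas_mult_ok2 G K M (snd (f i)) (snd (g j))} (\<lambda>(i,j). c i * d j)
        (\<lambda>(i,j). (bas_mult G K M (fst (f i)) (fst (g j)), bas_mult2 G K M (snd (f i)) (snd (g j)))) z"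
    using assms by (subst lcomb_if_pair[symmetric]) (auto simp: case_prod_beta')
  finally show "hmul3 G K M (lcomb I c f) (lcomb J d g) z = \<dots>" .
qed

definition coprod_term :: "('g,'b) monoid_scheme \<Rightarrow> 'g set \<Rightarrow> 'g set \<Rightarrow> 'g \<Rightarrow> 'g \<Rightarrow> 'g \<times> 'g" where
  "coprod_term G K M g h =
     (fK G K M g \<otimes>\<^bsub>G\<^esub> inv\<^bsub>G\<^esub> h \<otimes>\<^bsub>G\<^esub> actM G K M h (fM G K M g), h \<otimes>\<^bsub>G\<^esub> fM G K M g)"

lemma dc_eq_coprod_term: "dc G K M g z w = (\<Sum>h\<in>K. if (z,w) = coprod_term G K M g h then 1 else 0)"
  unfolding dc_def coprod_term_def by simp

lemma hDelta_lcomb: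
  fixes G :: "('g,'b) monoid_scheme"
  assumes "finite (carrier G)" "finite I" "f ` I \<subseteq> carrier G"
  shows "hDelta G K M (lcomb I c f) = lcomb (I\<times>K) (\<lambda>(i,h). c i) (\<lambda>(i,h). coprod_term G K M (f i) h)"
proof
  fix p :: "'g \<times> 'g"
  obtain z w where p: "p = (z,w)" by fastforce
  have "hDelta G K M (lcomb I c f) p = (\<Sum>i\<in>I. c i * dc G K M (f i) z w)"
    unfolding hDelta_def p using assms by (simp add: sum_lcomb_mult)
  also have "\<dots> = lcomb (I\<times>K) (\<lambda>(i,h). c i) (\<lambda>(i,h). coprod_term G K M (f i) h) p"
    unfolding lcomb_Times dc_eq_coprod_term p by (auto simp: sum_distrib_left intro!: sum.cong)
  finally show "hDelta G K M (lcomb I c f) p = \<dots>" .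
qed

lemma Delta_id_lcomb:
  fixes G :: "('g,'b) monoid_scheme"
  assumes "finite (carrier G)" "finite I" "f ` I \<subseteq> carrier G \<times> carrier G"
  shows "Delta_id G K M (lcomb I c f) = lcomb (I\<times>K) (\<lambda>(i,h). c i)
     (\<lambda>(i,h). (fst (coprod_term G K M (fst (f i)) h), snd (coprod_term G K M (fst (f i)) h), snd (f i)))"
proof
  fix p :: "'g \<times> 'g \<times> 'g"
  obtain z w y where p: "p = (z,w,y)" by (cases p) fastforce
  have "(\<lambda>i. fst (f i)) ` I \<subseteq> carrier G" using assms(3) by force
  then have "Delta_id G K M (lcomb I c f) p =
      (\<Sum>i\<in>I. (if snd (f i) = y then c i else 0) * dc G K M (fst (f i)) z w)"
    unfolding Delta_id_def p lcomb_at_pair_fst using assms by (simp add: sum_lcomb_mult)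
  also have "\<dots> = lcomb (I\<times>K) (\<lambda>(i,h). c i)
     (\<lambda>(i,h). (fst (coprod_term G K M (fst (f i)) h), snd (coprod_term G K M (fst (f i)) h), snd (f i))) p"
    unfolding lcomb_Times dc_eq_coprod_term p
    by (auto simp: sum_distrib_left prod_eq_iff intro!: sum.cong)
  finally show "Delta_id G K M (lcomb I c f) p = \<dots>" .
qed

lemma id_Delta_lcomb:
  fixes G :: "('g,'b) monoid_scheme"
  assumes "finite (carrier G)" "finite I" "f ` I \<subseteq> carrier G \<times> carrier G"
  shows "id_Delta G K M (lcomb I c f) = lcomb (I\<times>K) (\<lambda>(i,h). c i)
     (\<lambda>(i,h). (fst (f i), fst (coprod_term G K M (snd (f i)) h), snd (coprod_term G K M (snd (f i)) h)))"
proof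
  fix p :: "'g \<times> 'g \<times> 'g"
  obtain z w y where p: "p = (y,z,w)" by (cases p) fastforce
  have "(\<lambda>i. snd (f i)) ` I \<subseteq> carrier G" using assms(3) by force
  then have "id_Delta G K M (lcomb I c f) p =
      (\<Sum>i\<in>I. (if fst (f i) = y then c i else 0) * dc G K M (snd (f i)) z w)"
    unfolding id_Delta_def p lcomb_at_pair_snd using assms by (simp add: sum_lcomb_mult)
  also have "\<dots> = lcomb (I\<times>K) (\<lambda>(i,h). c i)
     (\<lambda>(i,h). (fst (f i), fst (coprod_term G K M (snd (f i)) h), snd (coprod_term G K M (snd (f i)) h))) p"
    unfolding lcomb_Times dc_eq_coprod_term p
    by (auto simp: sum_distrib_left prod_eq_iff intro!: sum.cong)
  finally show "id_Delta G K M (lcomb I c f) p = \<dots>" .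
qed

lemma sum_if_conj_eq:
  "finite K \<Longrightarrow> (\<Sum>k'\<in>K. if P \<and> k = k' then x else 0) = (if k \<in> K \<and> P then x else 0)"
  by (cases P) (auto simp: sum.delta)

lemma tens_T1_lcomb:
  assumes "finite K"
  shows "tens_T1 K (lcomb I c f) = lcomb (I\<times>K) (\<lambda>(i,k). c i) (\<lambda>(i,k). (fst (f i), snd (f i), k))"
proof
  fix p :: "'a \<times> 'a \<times> 'a"
  obtain a b k where p: "p = (a,b,k)" by (cases p) fastforce
  have "lcomb (I\<times>K) (\<lambda>(i,k). c i) (\<lambda>(i,k). (fst (f i), snd (f i), k)) p
     = (\<Sum>i\<in>I. \<Sum>k'\<in>K. if (a,b) = f i \<and> k = k' then c i else 0)"
    unfolding lcomb_Times p by (auto simp: prod_eq_iff intro!: sum.cong)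
  also have "\<dots> = (\<Sum>i\<in>I. if k \<in> K \<and> (a,b) = f i then c i else 0)"
    using assms by (simp add: sum_if_conj_eq)
  also have "\<dots> = tens_T1 K (lcomb I c f) p"
    unfolding tens_T1_def p hone_def lcomb_def by (auto simp: sum_distrib_right intro!: sum.cong)
  finally show "tens_T1 K (lcomb I c f) p = lcomb (I\<times>K) (\<lambda>(i,k). c i) (\<lambda>(i,k). (fst (f i), snd (f i), k)) p"
    by simp
qed

lemma tens_1T_lcomb:
  assumes "finite K"
  shows "tens_1T K (lcomb I c f) = lcomb (K\<times>I) (\<lambda>(k,i). c i) (\<lambda>(k,i). (k, fst (f i), snd (f i)))"
proof
  fix p :: "'a \<times> 'a \<times> 'a"
  obtain a b k where p: "p = (k,a,b)" by (cases p) fastforce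
  have "lcomb (K\<times>I) (\<lambda>(k,i). c i) (\<lambda>(k,i). (k, fst (f i), snd (f i))) p
     = (\<Sum>k'\<in>K. \<Sum>i\<in>I. if (a,b) = f i \<and> k = k' then c i else 0)"
    unfolding lcomb_Times p by (auto simp: prod_eq_iff intro!: sum.cong)
  also have "\<dots> = (\<Sum>i\<in>I. \<Sum>k'\<in>K. if (a,b) = f i \<and> k = k' then c i else 0)"
    by (rule sum.swap)
  also have "\<dots> = (\<Sum>i\<in>I. if k \<in> K \<and> (a,b) = f i then c i else 0)"
    using assms by (simp add: sum_if_conj_eq)
  also have "\<dots> = tens_1T K (lcomb I c f) p"
    unfolding tens_1T_def p hone_def lcomb_def by (auto simp: sum_distrib_left intro!: sum.cong)
  finally show "tens_1T K (lcomb I c f) p = lcomb (K\<times>I) (\<lambda>(k,i). c i) (\<lambda>(k,i). (k, fst (f i), snd (f i))) p"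
    by simp
qed

lemma tens_map_lcomb:
  fixes G :: "('g,'b) monoid_scheme"
  assumes "finite (carrier G)" "finite I" "f ` I \<subseteq> carrier G \<times> carrier G"
    and phi_bas: "\<And>g. g \<in> carrier G \<Longrightarrow> phi (bas g) = bas (\<psi> g)"
  shows "tens_map G phi (lcomb I c f) = lcomb I c (\<lambda>i. (\<psi> (fst (f i)), \<psi> (snd (f i))))"
proof
  fix p :: "'g \<times> 'g"
  obtain z w where p: "p = (z,w)" by fastforce
  have "tens_map G phi (lcomb I c f) p =
      (\<Sum>q\<in>carrier G \<times> carrier G. lcomb I c f q * (phi (bas (fst q)) z * phi (bas (snd q)) w))"
    unfolding tens_map_def p by (simp add: case_prod_beta' mult.assoc)
  also have "\<dots> = (\<Sum>i\<in>I. c i * (phi (bas (fst (f i))) z * phi (bas (snd (f i))) w))"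
    using assms by (simp add: sum_lcomb_mult)
  also have "\<dots> = (\<Sum>i\<in>I. c i * (bas (\<psi> (fst (f i))) z * bas (\<psi> (snd (f i))) w))"
    using assms(3) by (intro sum.cong) (auto simp: phi_bas mem_Times_iff)
  also have "\<dots> = lcomb I c (\<lambda>i. (\<psi> (fst (f i)), \<psi> (snd (f i)))) p"
    unfolding lcomb_def bas_def p by (auto intro!: sum.cong)
  finally show "tens_map G phi (lcomb I c f) p = \<dots>" .
qed

lemma eps_id_lcomb:
  fixes G :: "('g,'b) monoid_scheme"
  assumes "finite (carrier G)" "finite I" "f ` I \<subseteq> carrier G \<times> carrier G"
  shows "eps_id G K M (lcomb I c f) = lcomb I (\<lambda>i. c i * ec G K M (fst (f i))) (\<lambda>i. snd (f i))"
proof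
  fix y
  have fi: "(\<lambda>i. fst (f i)) ` I \<subseteq> carrier G" using assms(3) by force
  have "eps_id G K M (lcomb I c f) y =
      (\<Sum>g\<in>carrier G. lcomb I (\<lambda>i. if snd (f i) = y then c i else 0) (\<lambda>i. fst (f i)) g * ec G K M g)"
    unfolding eps_id_def lcomb_at_pair_fst by (simp add: mult.commute)
  also have "\<dots> = lcomb I (\<lambda>i. c i * ec G K M (fst (f i))) (\<lambda>i. snd (f i)) y"
    using assms fi by (simp add: sum_lcomb_mult) (auto simp: lcomb_def intro!: sum.cong)
  finally show "eps_id G K M (lcomb I c f) y = \<dots>" .
qed

lemma id_eps_lcomb:
  fixes G :: "('g,'b) monoid_scheme"
  assumes "finite (carrier G)" "finite I" "f ` I \<subseteq> carrier G \<times> carrier G"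
  shows "id_eps G K M (lcomb I c f) = lcomb I (\<lambda>i. c i * ec G K M (snd (f i))) (\<lambda>i. fst (f i))"
proof
  fix y
  have fi: "(\<lambda>i. snd (f i)) ` I \<subseteq> carrier G" using assms(3) by force
  have "id_eps G K M (lcomb I c f) y =
      (\<Sum>g\<in>carrier G. lcomb I (\<lambda>i. if fst (f i) = y then c i else 0) (\<lambda>i. snd (f i)) g * ec G K M g)"
    unfolding id_eps_def lcomb_at_pair_snd by simp
  also have "\<dots> = lcomb I (\<lambda>i. c i * ec G K M (snd (f i))) (\<lambda>i. fst (f i)) y"
    using assms fi by (simp add: sum_lcomb_mult) (auto simp: lcomb_def intro!: sum.cong)
  finally show "id_eps G K M (lcomb I c f) y = \<dots>" .
qed

lemma hone_lcomb: "finite K \<Longrightarrow> hone K = lcomb K (\<lambda>_. 1) id"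
  unfolding hone_def lcomb_def by (auto intro!: ext)

lemma hone2_lcomb: "finite K \<Longrightarrow> hone2 K = lcomb (K\<times>K) (\<lambda>_. 1) id"
  unfolding hone2_def hone_def lcomb_def by (auto intro!: ext)

lemma T_sigma_lcomb: "T_sigma G K \<sigma> = lcomb (K\<times>K) (\<lambda>_. 1) (\<lambda>(u,v). (u \<otimes>\<^bsub>G\<^esub> \<sigma> v, v))"
  unfolding T_sigma_def lcomb_Times by (auto intro!: ext sum.cong)

section \<open>A single unique factorization\<close>

locale factorization = group G for G :: "('g,'b) monoid_scheme" (structure) +
  fixes K M :: "'g set"
  assumes unique_fact: "unique_factorization G K M"
begin

abbreviation "kpart \<equiv> fK G K M"
abbreviation "mpart \<equiv> fM G K M"
abbreviation "lact \<equiv> actM G K M"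
abbreviation "ract \<equiv> actK G K M"

lemma subgroup_K: "subgroup K G" and subgroup_M: "subgroup M G"
  using unique_fact unfolding unique_factorization_def by auto

lemma K_carrier: "u \<in> K \<Longrightarrow> u \<in> carrier G" and M_carrier: "x \<in> M \<Longrightarrow> x \<in> carrier G"
  using subgroup_K subgroup_M by (auto dest: subgroup.subset)

lemma K_mult: "u \<in> K \<Longrightarrow> v \<in> K \<Longrightarrow> u \<otimes> v \<in> K" and K_inv: "u \<in> K \<Longrightarrow> inv u \<in> K"
  and K_one: "\<one> \<in> K"
  using subgroup_K by (auto intro: subgroup.m_closed subgroup.m_inv_closed subgroup.one_closed)

lemma M_mult: "x \<in> M \<Longrightarrow> y \<in> M \<Longrightarrow> x \<otimes> y \<in> M" and M_inv: "x \<in> M \<Longrightarrow> inv x \<in> M"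
  and M_one: "\<one> \<in> M"
  using subgroup_M by (auto intro: subgroup.m_closed subgroup.m_inv_closed subgroup.one_closed)

lemma factor_exists: "g \<in> carrier G \<Longrightarrow> \<exists>u\<in>K. \<exists>x\<in>M. g = u \<otimes> x"
  using unique_fact unfolding unique_factorization_def by fast

lemma factor_unique:
  assumes "u \<in> K" "u' \<in> K" "x \<in> M" "x' \<in> M" "u \<otimes> x = u' \<otimes> x'"
  shows "u = u' \<and> x = x'"
proof -
  have "u \<otimes> x \<in> carrier G" using assms K_carrier M_carrier by auto
  then have "\<exists>!p. fst p \<in> K \<and> snd p \<in> M \<and> u \<otimes> x = fst p \<otimes> snd p"
    using unique_fact unfolding unique_factorization_def by blast
  then have "(u,x) = (u',x')" using assms by (metis fst_conv snd_conv)
  then show ?thesis by simp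
qed

lemma K_Int_M: "u \<in> K \<Longrightarrow> u \<in> M \<Longrightarrow> u = \<one>"
proof -
  assume "u \<in> K" "u \<in> M"
  moreover have "u \<otimes> \<one> = \<one> \<otimes> u" using \<open>u \<in> K\<close> K_carrier by simp
  ultimately show "u = \<one>" using factor_unique[of u \<one> \<one> u] K_one M_one by blast
qed

lemma factor_unique_MK:
  assumes "y \<in> M" "y' \<in> M" "v \<in> K" "v' \<in> K" "y \<otimes> v = y' \<otimes> v'"
  shows "y = y' \<and> v = v'"
proof -
  have C: "y \<in> carrier G" "y' \<in> carrier G" "v \<in> carrier G" "v' \<in> carrier G"
    using assms K_carrier M_carrier by auto
  have "inv v \<otimes> inv y = inv v' \<otimes> inv y'"
    using assms(5) C by (metis inv_mult_group)
  then have "inv v = inv v' \<and> inv y = inv y'"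
    using factor_unique assms K_inv M_inv by blast
  then show ?thesis using C by (metis inv_inv)
qed

lemma factor_exists_MK: "g \<in> carrier G \<Longrightarrow> \<exists>y\<in>M. \<exists>v\<in>K. g = y \<otimes> v"
proof -
  assume g: "g \<in> carrier G"
  then obtain u x where ux: "u \<in> K" "x \<in> M" "inv g = u \<otimes> x" using factor_exists[of "inv g"] by auto
  then have "g = inv x \<otimes> inv u"
    using g K_carrier M_carrier by (metis inv_inv inv_mult_group)
  then show ?thesis using ux M_inv K_inv by blast
qed

lemma kpart_mult: assumes "u \<in> K" "x \<in> M" shows "kpart (u \<otimes> x) = u"
  unfolding fK_def
proof (rule the_equality)
  show "u \<in> K \<and> (\<exists>x'\<in>M. u \<otimes> x = u \<otimes> x')" using assms by blast
qed (use assms factor_unique in blast)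

lemma mpart_mult: assumes "u \<in> K" "x \<in> M" shows "mpart (u \<otimes> x) = x"
  unfolding fM_def
proof (rule the_equality)
  show "x \<in> M \<and> (\<exists>u'\<in>K. u \<otimes> x = u' \<otimes> x)" using assms by blast
qed (use assms factor_unique in blast)

lemma mpart_in: "g \<in> carrier G \<Longrightarrow> mpart g \<in> M"
  using factor_exists mpart_mult by force

lemma kpart_K: "u \<in> K \<Longrightarrow> kpart u = u" and mpart_K: "u \<in> K \<Longrightarrow> mpart u = \<one>"
  using kpart_mult[of u \<one>] mpart_mult[of u \<one>] M_one K_carrier by simp_all

lemma kpart_mult_mult: "u \<in> K \<Longrightarrow> x \<in> M \<Longrightarrow> y \<in> M \<Longrightarrow> kpart (u \<otimes> x \<otimes> y) = u"
  using kpart_mult[of u "x \<otimes> y"] M_mult K_carrier M_carrier by (simp add: m_assoc)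

lemma mpart_mult_mult: "u \<in> K \<Longrightarrow> x \<in> M \<Longrightarrow> y \<in> M \<Longrightarrow> mpart (u \<otimes> x \<otimes> y) = x \<otimes> y"
  using mpart_mult[of u "x \<otimes> y"] M_mult K_carrier M_carrier by (simp add: m_assoc)

lemma bij_betw_mult_K_M: "bij_betw (\<lambda>(u,x). u \<otimes> x) (K \<times> M) (carrier G)"
proof (rule bij_betw_imageI)
  show "inj_on (\<lambda>(u,x). u \<otimes> x) (K \<times> M)"
    by (auto simp: inj_on_def dest: factor_unique)
  show "(\<lambda>(u,x). u \<otimes> x) ` (K \<times> M) = carrier G"
    using K_carrier M_carrier by (auto dest!: factor_exists)
qed

lemma act_unique:
  assumes "u \<in> K" "x \<in> M" "y \<in> M" "v \<in> K" "u \<otimes> x = y \<otimes> v"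
  shows "lact u x = y" "ract u x = v"
proof -
  have uniq: "y' = y \<and> v' = v" if "y' \<in> M" "v' \<in> K" "u \<otimes> x = y' \<otimes> v'" for y' v'
    using factor_unique_MK[of y' y v' v] that assms by simp
  show "lact u x = y" unfolding actM_def
    by (rule the_equality) (use assms uniq in blast)+
  show "ract u x = v" unfolding actK_def
    by (rule the_equality) (use assms uniq in blast)+
qed

lemma
  assumes "u \<in> K" "x \<in> M"
  shows lact_in: "lact u x \<in> M" and ract_in: "ract u x \<in> K"
    and mult_eq_lact_ract: "u \<otimes> x = lact u x \<otimes> ract u x"
proof -
  obtain y v where "y \<in> M" "v \<in> K" "u \<otimes> x = y \<otimes> v"
    using factor_exists_MK[of "u \<otimes> x"] assms K_carrier M_carrier by blast
  then show "lact u x \<in> M" "ract u x \<in> K" "u \<otimes> x = lact u x \<otimes> ract u x"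
    using act_unique[OF assms] by auto
qed

lemma lact_one: "u \<in> K \<Longrightarrow> lact u \<one> = \<one>" and ract_one: "u \<in> K \<Longrightarrow> ract u \<one> = u"
  using act_unique[of u \<one> \<one> u] M_one K_carrier by auto

lemma ract_mult:
  assumes "u \<in> K" "x \<in> M" "y \<in> M"
  shows "ract u (x \<otimes> y) = ract (ract u x) y"
proof (rule act_unique(2))
  have C: "u \<in> carrier G" "x \<in> carrier G" "y \<in> carrier G" "lact u x \<in> carrier G"
      "lact (ract u x) y \<in> carrier G" "ract (ract u x) y \<in> carrier G"
    using assms K_carrier M_carrier lact_in ract_in by auto
  have "u \<otimes> (x \<otimes> y) = (u \<otimes> x) \<otimes> y" using C by (simp add: m_assoc)
  also have "\<dots> = lact u x \<otimes> (ract u x \<otimes> y)"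
    using assms C mult_eq_lact_ract ract_in K_carrier by (simp add: m_assoc)
  also have "\<dots> = lact u x \<otimes> lact (ract u x) y \<otimes> ract (ract u x) y"
    using assms C mult_eq_lact_ract[of "ract u x" y] ract_in by (simp add: m_assoc)
  finally show "u \<otimes> (x \<otimes> y) = lact u x \<otimes> lact (ract u x) y \<otimes> ract (ract u x) y" .
qed (use assms M_mult lact_in ract_in in auto)

lemma ract_ract_inv: "u \<in> K \<Longrightarrow> x \<in> M \<Longrightarrow> ract (ract u (inv x)) x = u"
  using ract_mult[of u "inv x" x] M_inv M_carrier ract_one by simp

lemma ract_eq_iff: "u \<in> K \<Longrightarrow> w \<in> K \<Longrightarrow> x \<in> M \<Longrightarrow> ract u x = w \<longleftrightarrow> u = ract w (inv x)"
  using ract_ract_inv[of u "inv x"] ract_ract_inv[of w x] M_inv M_carrier by auto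

lemma bas_mult_carrier: "g \<in> carrier G \<Longrightarrow> h \<in> carrier G \<Longrightarrow> bas_mult G K M g h \<in> carrier G"
  unfolding bas_mult_def using mpart_in M_carrier by simp

lemma coprod_term_mult:
  "u \<in> K \<Longrightarrow> x \<in> M \<Longrightarrow> coprod_term G K M (u \<otimes> x) h = (u \<otimes> inv h \<otimes> lact h x, h \<otimes> x)"
  unfolding coprod_term_def by (simp add: kpart_mult mpart_mult)

lemma hmul2_hmul2_lcomb:
  assumes "finite (carrier G)" "finite I1" "finite I2" "finite I3" "f1 ` I1 \<subseteq> carrier G \<times> carrier G"
    "f2 ` I2 \<subseteq> carrier G \<times> carrier G" "f3 ` I3 \<subseteq> carrier G \<times> carrier G"
  shows "hmul2 G K M (hmul2 G K M (lcomb I1 c1 f1) (lcomb I2 c2 f2)) (lcomb I3 c3 f3) =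
    lcomb {(k,l)\<in>{(i,j)\<in>I1\<times>I2. bas_mult_ok2 G K M (f1 i) (f2 j)} \<times> I3.
        bas_mult_ok2 G K M (case k of (i,j) \<Rightarrow> bas_mult2 G K M (f1 i) (f2 j)) (f3 l)}
      (\<lambda>(k,l). (case k of (i,j) \<Rightarrow> c1 i * c2 j) * c3 l)
      (\<lambda>(k,l). bas_mult2 G K M (case k of (i,j) \<Rightarrow> bas_mult2 G K M (f1 i) (f2 j)) (f3 l))"
proof -
  have fin: "finite {(i,j)\<in>I1\<times>I2. bas_mult_ok2 G K M (f1 i) (f2 j)}"
    using assms by (auto intro: finite_subset[of _ "I1\<times>I2"])
  have im: "(\<lambda>(i,j). bas_mult2 G K M (f1 i) (f2 j)) ` {(i,j)\<in>I1\<times>I2. bas_mult_ok2 G K M (f1 i) (f2 j)}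
      \<subseteq> carrier G \<times> carrier G"
    using assms(5,6) unfolding bas_mult2_def by (force intro!: bas_mult_carrier)
  show ?thesis
    unfolding hmul2_lcomb[OF assms(1,2,3,5,6)] hmul2_lcomb[OF assms(1) fin assms(4) im assms(7)] by simp
qed

lemma mult_in_K_iff: "u \<in> K \<Longrightarrow> x \<in> M \<Longrightarrow> u \<otimes> x \<in> K \<longleftrightarrow> x = \<one>"
proof
  assume "u \<in> K" "x \<in> M" "u \<otimes> x \<in> K"
  moreover have "x = inv u \<otimes> (u \<otimes> x)"
    using \<open>u \<in> K\<close> \<open>x \<in> M\<close> K_carrier M_carrier by (simp add: m_assoc[symmetric])
  ultimately show "x = \<one>" using K_Int_M K_mult K_inv by metis
qed (simp add: K_carrier)

lemma ec_mult: "u \<in> K \<Longrightarrow> x \<in> M \<Longrightarrow> ec G K M (u \<otimes> x) = (if u = \<one> then 1 else 0)"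
  unfolding ec_def using kpart_mult by simp

end

section \<open>Two factorizations related by \<open>\<sigma>\<close>\<close>

locale twisted_factorization = factorization G K M for G :: "('g,'b) monoid_scheme" (structure) and K M +
  fixes K' :: "'g set" and \<sigma> :: "'g \<Rightarrow> 'g"
  assumes unique_fact': "unique_factorization G K' M"
    and sigma_in: "\<forall>u\<in>K. \<sigma> u \<in> M"
    and K'_eq: "K' = {\<sigma> u \<otimes> u | u. u \<in> K}"
begin

sublocale F': factorization G K' M
  by unfold_locales (rule unique_fact')

definition twist :: "'g \<Rightarrow> 'g" where
  "twist u = \<sigma> u \<otimes> u"

lemma sigma_M: "u \<in> K \<Longrightarrow> \<sigma> u \<in> M"
  using sigma_in by blast

lemma twist_in: "u \<in> K \<Longrightarrow> twist u \<in> K'"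
  unfolding twist_def K'_eq by blast

lemma K'_twist: "k \<in> K' \<Longrightarrow> \<exists>u\<in>K. k = twist u"
  unfolding twist_def K'_eq by blast

lemmas closure_simps = K_mult K_inv K_one M_mult M_inv M_one K_carrier M_carrier sigma_M
  lact_in ract_in twist_in F'.K_carrier

lemma twist_inj: "u \<in> K \<Longrightarrow> v \<in> K \<Longrightarrow> twist u = twist v \<Longrightarrow> u = v"
  unfolding twist_def using factor_unique_MK sigma_M by blast

lemma twist_eq_of_coset:
  assumes "k \<in> K'" "d \<in> K" "k \<otimes> inv d \<in> M"
  shows "k = twist d"
proof -
  obtain e where e: "e \<in> K" "k = \<sigma> e \<otimes> e" using K'_twist[OF assms(1)] unfolding twist_def by auto
  have "e \<otimes> inv d = inv (\<sigma> e) \<otimes> (k \<otimes> inv d)"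
    using e assms by (simp add: closure_simps m_assoc[symmetric])
  also have "\<dots> \<in> M" using assms e by (simp add: closure_simps)
  finally have "e \<otimes> inv d = \<one>" using K_Int_M e assms by (simp add: closure_simps)
  then have "e = d" using e assms by (simp add: closure_simps inv_solve_right')
  then show ?thesis using e twist_def by simp
qed

lemma sigma_one: "\<sigma> \<one> = \<one>"
proof -
  have "\<sigma> \<one> = twist \<one>" unfolding twist_def using K_one by (simp add: closure_simps)
  then have "\<sigma> \<one> \<in> K'" using twist_in K_one by metis
  then show ?thesis using F'.K_Int_M sigma_M K_one by blast
qed

text \<open>Closure of \<open>K'\<close> under multiplication, in the form of a cocycle identity for \<open>\<sigma>\<close>:
  \<open>twist a \<otimes> twist b = (\<sigma> a \<otimes> lact a (\<sigma> b)) \<otimes> (ract a (\<sigma> b) \<otimes> b)\<close> lies in \<open>K'\<close>,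
  so it is the twist of its \<open>K\<close>-part.\<close>

lemma sigma_cocycle:
  assumes a: "a \<in> K" and b: "b \<in> K"
  shows "\<sigma> a \<otimes> lact a (\<sigma> b) = \<sigma> (ract a (\<sigma> b) \<otimes> b)"
proof -
  define y where "y = lact a (\<sigma> b)"
  define d where "d = ract a (\<sigma> b) \<otimes> b"
  have y: "y \<in> M" and d: "d \<in> K" unfolding y_def d_def using a b by (simp_all add: closure_simps)
  have prod: "twist a \<otimes> twist b = (\<sigma> a \<otimes> y) \<otimes> d"
  proof -
    have "twist a \<otimes> twist b = \<sigma> a \<otimes> (a \<otimes> \<sigma> b) \<otimes> b"
      unfolding twist_def using a b by (simp add: closure_simps m_assoc)
    also have "\<dots> = \<sigma> a \<otimes> (y \<otimes> ract a (\<sigma> b)) \<otimes> b"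
      unfolding y_def using a b mult_eq_lact_ract sigma_M by simp
    also have "\<dots> = (\<sigma> a \<otimes> y) \<otimes> d"
      unfolding d_def using a b y by (simp add: closure_simps m_assoc)
    finally show ?thesis .
  qed
  have "twist a \<otimes> twist b \<otimes> inv d = \<sigma> a \<otimes> y"
    using prod a y d by (simp add: closure_simps m_assoc)
  then have "twist a \<otimes> twist b = twist d"
    using twist_eq_of_coset[OF F'.K_mult[OF twist_in[OF a] twist_in[OF b]] d] a y
    by (simp add: closure_simps)
  then have "(\<sigma> a \<otimes> y) \<otimes> d = \<sigma> d \<otimes> d" using prod twist_def by simp
  then show ?thesis
    unfolding y_def[symmetric] d_def[symmetric] using a y d by (simp add: closure_simps)
qed

lemma twist_mult_sigma:
  assumes "t \<in> K" "h \<in> K"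
  shows "twist t \<otimes> \<sigma> h = \<sigma> (ract t (\<sigma> h) \<otimes> h) \<otimes> ract t (\<sigma> h)"
proof -
  have "twist t \<otimes> \<sigma> h = \<sigma> t \<otimes> (lact t (\<sigma> h) \<otimes> ract t (\<sigma> h))"
    unfolding twist_def using assms mult_eq_lact_ract[of t "\<sigma> h"] by (simp add: closure_simps m_assoc)
  also have "\<dots> = \<sigma> (ract t (\<sigma> h) \<otimes> h) \<otimes> ract t (\<sigma> h)"
    using assms sigma_cocycle by (simp add: closure_simps m_assoc[symmetric])
  finally show ?thesis .
qed

lemma
  assumes u: "u \<in> K" and x: "x \<in> M"
  shows ract_twist: "F'.ract (twist u) x = twist (ract u x)"
    and lact_twist: "F'.lact (twist u) x = \<sigma> u \<otimes> lact u x \<otimes> inv (\<sigma> (ract u x))"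
proof -
  define r where "r = ract u x"
  have r: "r \<in> K" unfolding r_def using u x by (simp add: closure_simps)
  have "twist u \<otimes> x = \<sigma> u \<otimes> (lact u x \<otimes> r)"
    unfolding twist_def r_def using u x mult_eq_lact_ract[OF u x] by (simp add: closure_simps m_assoc)
  also have "lact u x \<otimes> r = lact u x \<otimes> (inv (\<sigma> r) \<otimes> (\<sigma> r \<otimes> r))"
    using r by (simp add: closure_simps m_assoc[symmetric])
  finally have "twist u \<otimes> x = (\<sigma> u \<otimes> lact u x \<otimes> inv (\<sigma> r)) \<otimes> twist r"
    unfolding twist_def using u x r by (simp add: closure_simps m_assoc)
  moreover have "\<sigma> u \<otimes> lact u x \<otimes> inv (\<sigma> r) \<in> M" using u x r by (simp add: closure_simps)
  ultimately show "F'.ract (twist u) x = twist (ract u x)"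
    and "F'.lact (twist u) x = \<sigma> u \<otimes> lact u x \<otimes> inv (\<sigma> (ract u x))"
    using F'.act_unique[OF twist_in[OF u] x _ twist_in[OF r]] unfolding r_def by simp_all
qed

lemma bij_betw_twist: "bij_betw twist K K'"
  by (rule bij_betw_imageI) (auto simp: inj_on_def twist_in dest: twist_inj K'_twist)

lemma bij_betw_twist_mult: "bij_betw (\<lambda>(u,x). twist u \<otimes> x) (K \<times> M) (carrier G)"
proof -
  have "bij_betw ((\<lambda>(k,x). k \<otimes> x) \<circ> map_prod twist id) (K \<times> M) (carrier G)"
    by (rule bij_betw_trans[OF bij_betw_map_prod[OF bij_betw_twist bij_betw_id] F'.bij_betw_mult_K_M])
  then show ?thesis by (simp add: comp_def case_prod_beta')
qed

definition twist_G :: "'g \<Rightarrow> 'g" where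
  "twist_G g = \<sigma> (kpart g) \<otimes> g"

definition untwist_G :: "'g \<Rightarrow> 'g" where
  "untwist_G = the_inv_into (carrier G) twist_G"

lemma twist_G_mult: "u \<in> K \<Longrightarrow> x \<in> M \<Longrightarrow> twist_G (u \<otimes> x) = twist u \<otimes> x"
  unfolding twist_G_def twist_def by (simp add: kpart_mult closure_simps m_assoc)

lemma bij_betw_twist_G: "bij_betw twist_G (carrier G) (carrier G)"
proof -
  have "bij_betw (twist_G \<circ> (\<lambda>(u,x). u \<otimes> x)) (K \<times> M) (carrier G)"
    using bij_betw_twist_mult by (rule bij_betw_cong[THEN iffD1, rotated]) (auto simp: twist_G_mult)
  then show ?thesis using bij_betw_comp_iff[OF bij_betw_mult_K_M] by blast
qed

lemma untwist_G_twist_G: "g \<in> carrier G \<Longrightarrow> untwist_G (twist_G g) = g"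
  unfolding untwist_G_def using bij_betw_twist_G by (simp add: bij_betw_def the_inv_into_f_f)

lemma twist_G_untwist_G: "g \<in> carrier G \<Longrightarrow> twist_G (untwist_G g) = g"
  unfolding untwist_G_def using bij_betw_twist_G by (simp add: f_the_inv_into_f_bij_betw)

lemma untwist_G_carrier: "g \<in> carrier G \<Longrightarrow> untwist_G g \<in> carrier G"
  unfolding untwist_G_def using bij_betw_twist_G bij_betw_the_inv_into bij_betw_apply by fast

lemma twist_G_carrier: "g \<in> carrier G \<Longrightarrow> twist_G g \<in> carrier G"
  using bij_betw_twist_G bij_betw_apply by fast

lemma untwist_G_twist_mult: "u \<in> K \<Longrightarrow> x \<in> M \<Longrightarrow> untwist_G (twist u \<otimes> x) = u \<otimes> x"
  using untwist_G_twist_G[of "u \<otimes> x"] by (simp add: twist_G_mult closure_simps)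

lemma twist_G_in_K'_iff: "g \<in> carrier G \<Longrightarrow> twist_G g \<in> K' \<longleftrightarrow> g \<in> K"
  using factor_exists mult_in_K_iff F'.mult_in_K_iff twist_G_mult twist_in by force

lemma bas_mult_ok_twist:
  assumes "u \<in> K" "v \<in> K" "x \<in> M" "y \<in> M"
  shows "bas_mult_ok G K' M (twist u \<otimes> x) (twist v \<otimes> y) \<longleftrightarrow> bas_mult_ok G K M (u \<otimes> x) (v \<otimes> y)"
  using assms twist_inj
  by (auto simp: bas_mult_ok_def kpart_mult mpart_mult F'.kpart_mult F'.mpart_mult ract_twist closure_simps)

lemma untwist_G_bas_mult_twist:
  assumes "u \<in> K" "v \<in> K" "x \<in> M" "y \<in> M"
  shows "untwist_G (bas_mult G K' M (twist u \<otimes> x) (twist v \<otimes> y)) = bas_mult G K M (u \<otimes> x) (v \<otimes> y)"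
  using assms untwist_G_twist_mult[of u "x \<otimes> y"]
  by (simp add: bas_mult_def mpart_mult F'.mpart_mult closure_simps m_assoc)

text \<open>An instance of \<open>ract_eq_iff\<close> that is safe as a rewrite rule; the general one loops.\<close>

lemma ract_sigma_eq_iff:
  "v \<in> K \<Longrightarrow> u \<in> K \<Longrightarrow> h \<in> K \<Longrightarrow> ract v (\<sigma> h) = u \<otimes> inv h \<longleftrightarrow> v = ract (u \<otimes> inv h) (inv (\<sigma> h))"
  using ract_eq_iff[of v "u \<otimes> inv h" "\<sigma> h"] by (simp add: closure_simps)

lemma twist_ract_inv_mult_sigma:
  assumes "u \<in> K" "h \<in> K"
  shows "twist (ract (u \<otimes> inv h) (inv (\<sigma> h))) \<otimes> \<sigma> h = twist u \<otimes> inv h"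
proof -
  define t where "t = ract (u \<otimes> inv h) (inv (\<sigma> h))"
  have t: "t \<in> K" and rt: "ract t (\<sigma> h) = u \<otimes> inv h"
    unfolding t_def using assms ract_ract_inv by (simp_all add: closure_simps)
  have "twist t \<otimes> \<sigma> h = \<sigma> (u \<otimes> inv h \<otimes> h) \<otimes> (u \<otimes> inv h)"
    using twist_mult_sigma[OF t assms(2)] rt by simp
  also have "\<dots> = twist u \<otimes> inv h"
    unfolding twist_def using assms by (simp add: closure_simps m_assoc)
  finally show ?thesis unfolding t_def .
qed

lemma untwist_G_coprod_term_twist:
  assumes u: "u \<in> K" and h: "h \<in> K" and x: "x \<in> M"
  shows "untwist_G (twist u \<otimes> inv (twist h) \<otimes> F'.lact (twist h) x) =
    ract (u \<otimes> inv h) (inv (\<sigma> h)) \<otimes> (\<sigma> h \<otimes> lact h x \<otimes> inv (\<sigma> (ract h x)))"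
proof -
  define t where "t = ract (u \<otimes> inv h) (inv (\<sigma> h))"
  define m where "m = lact h x \<otimes> inv (\<sigma> (ract h x))"
  have t: "t \<in> K" and m: "m \<in> M" unfolding t_def m_def using u h x by (simp_all add: closure_simps)
  have "twist u \<otimes> inv (twist h) \<otimes> F'.lact (twist h) x = twist u \<otimes> inv h \<otimes> (inv (\<sigma> h) \<otimes> (\<sigma> h \<otimes> m))"
    unfolding twist_def m_def using u h x lact_twist
    by (simp add: closure_simps inv_mult_group m_assoc twist_def)
  also have "\<dots> = twist t \<otimes> \<sigma> h \<otimes> m"
    unfolding t_def using u h m twist_ract_inv_mult_sigma
    by (simp add: closure_simps m_assoc[symmetric] twist_def)
  finally have "twist u \<otimes> inv (twist h) \<otimes> F'.lact (twist h) x = twist t \<otimes> (\<sigma> h \<otimes> m)"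
    using t h m by (simp add: closure_simps m_assoc twist_def)
  then show ?thesis
    unfolding t_def[symmetric] using untwist_G_twist_mult t h m x
    by (simp add: closure_simps m_def m_assoc)
qed

end

section \<open>The quasi-isomorphism\<close>

locale finite_twisted_factorization =
  twisted_factorization G K M K' \<sigma> for G :: "('g,'b) monoid_scheme" (structure) and K M K' \<sigma> +
  assumes finite_carrier: "finite (carrier G)"
begin

abbreviation "\<phi> \<equiv> phi_sigma G K M \<sigma>"
abbreviation "T \<equiv> T_sigma G K \<sigma>"

lemma finite_K: "finite K" and finite_M: "finite M" and finite_K': "finite K'"
  using finite_carrier K_carrier M_carrier F'.K_carrier by (auto intro: finite_subset)

lemma phi_sigma_eq: "\<phi> a = (\<lambda>z. if z \<in> carrier G then a (twist_G z) else 0)"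
proof
  fix z
  have "\<phi> a z = (\<Sum>p\<in>K \<times> M. (\<lambda>g. if z = g then a (twist_G g) else 0) ((\<lambda>(u,x). u \<otimes> x) p))"
    unfolding phi_sigma_def sum.cartesian_product
    by (intro sum.cong) (auto simp: twist_G_mult twist_def)
  also have "\<dots> = (\<Sum>g\<in>carrier G. if z = g then a (twist_G g) else 0)"
    by (rule sum.reindex_bij_betw[OF bij_betw_mult_K_M])
  also have "\<dots> = (if z \<in> carrier G then a (twist_G z) else 0)"
    using finite_carrier by (simp add: sum.delta)
  finally show "\<phi> a z = \<dots>" .
qed

lemma phi_bas: "g \<in> carrier G \<Longrightarrow> \<phi> (bas g) = bas (untwist_G g)"
  unfolding phi_sigma_eq bas_def
  using untwist_G_twist_G twist_G_untwist_G untwist_G_carrier by (auto intro!: ext)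

lemma phi_lcomb:
  assumes "f ` I \<subseteq> carrier G"
  shows "\<phi> (lcomb I c f) = lcomb I c (\<lambda>i. untwist_G (f i))"
proof
  fix z
  show "\<phi> (lcomb I c f) z = lcomb I c (\<lambda>i. untwist_G (f i)) z"
  proof (cases "z \<in> carrier G")
    case True
    then have "twist_G z = f i \<longleftrightarrow> z = untwist_G (f i)" if "i \<in> I" for i
      using assms that untwist_G_twist_G twist_G_untwist_G by (metis image_subset_iff)
    then show ?thesis unfolding phi_sigma_eq lcomb_def using True by (auto intro!: sum.cong)
  next
    case False
    then have "z \<noteq> untwist_G (f i)" if "i \<in> I" for i
      using assms that untwist_G_carrier by blast
    then show ?thesis unfolding phi_sigma_eq lcomb_def using False by (auto intro!: sum.neutral)
  qed
qed

lemma Hsp_lcomb_twist: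
  "a \<in> Hsp G \<Longrightarrow> a = lcomb (K\<times>M) (\<lambda>(u,x). a (twist u \<otimes> x)) (\<lambda>(u,x). twist u \<otimes> x)"
proof -
  assume "a \<in> Hsp G"
  then have "a = lcomb (carrier G) a id"
    unfolding Hsp_def lcomb_def using finite_carrier by (auto intro!: ext simp: sum.delta)
  also have "\<dots> = lcomb (K\<times>M) (\<lambda>(u,x). a (twist u \<otimes> x)) (\<lambda>(u,x). twist u \<otimes> x)"
    by (rule sym, rule lcomb_reindex_bij[OF bij_betw_twist_mult]) auto
  finally show ?thesis .
qed

lemma phi_lcomb_K_M:
  "a \<in> Hsp G \<Longrightarrow> \<phi> a = lcomb (K\<times>M) (\<lambda>(u,x). a (twist u \<otimes> x)) (\<lambda>(u,x). u \<otimes> x)"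
  by (subst Hsp_lcomb_twist, assumption, subst phi_lcomb)
    (auto intro!: lcomb_cong simp: untwist_G_twist_mult closure_simps)

lemma phi_mult:
  assumes a: "a \<in> Hsp G" and b: "b \<in> Hsp G"
  shows "\<phi> (hmul G K' M a b) = hmul G K M (\<phi> a) (\<phi> b)"
proof -
  define A where "A = (\<lambda>(u,x). a (twist u \<otimes> x))"
  define B where "B = (\<lambda>(u,x). b (twist u \<otimes> x))"
  define F where "F = (\<lambda>(u,x). twist u \<otimes> x)"
  define E where "E = (\<lambda>(u::'g,x::'g). u \<otimes> x)"
  have fin: "finite (K \<times> M)" using finite_K finite_M by simp
  have F: "F ` (K \<times> M) \<subseteq> carrier G" and E: "E ` (K \<times> M) \<subseteq> carrier G"
    unfolding F_def E_def by (auto simp: closure_simps)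
  have "\<phi> (hmul G K' M a b) = \<phi> (lcomb {(i,j)\<in>(K\<times>M)\<times>(K\<times>M). bas_mult_ok G K' M (F i) (F j)}
      (\<lambda>(i,j). A i * B j) (\<lambda>(i,j). bas_mult G K' M (F i) (F j)))"
    using Hsp_lcomb_twist[OF a] Hsp_lcomb_twist[OF b] hmul_lcomb[OF finite_carrier fin fin F F]
    unfolding A_def B_def F_def by metis
  also have "\<dots> = lcomb {(i,j)\<in>(K\<times>M)\<times>(K\<times>M). bas_mult_ok G K M (E i) (E j)}
      (\<lambda>(i,j). A i * B j) (\<lambda>(i,j). bas_mult G K M (E i) (E j))"
  proof (subst phi_lcomb)
    show "(\<lambda>(i,j). bas_mult G K' M (F i) (F j)) ` {(i,j)\<in>(K\<times>M)\<times>(K\<times>M). bas_mult_ok G K' M (F i) (F j)}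
        \<subseteq> carrier G"
      using F by (auto intro: F'.bas_mult_carrier)
  qed (auto simp: F_def E_def bas_mult_ok_twist untwist_G_bas_mult_twist intro!: lcomb_cong)
  also have "\<dots> = hmul G K M (\<phi> a) (\<phi> b)"
    using phi_lcomb_K_M[OF a] phi_lcomb_K_M[OF b] hmul_lcomb[OF finite_carrier fin fin E E]
    unfolding A_def B_def E_def by metis
  finally show ?thesis .
qed

lemma phi_one: "\<phi> (hone K') = hone K"
  unfolding phi_sigma_eq hone_def using twist_G_in_K'_iff K_carrier by (auto intro!: ext)

lemma alg_iso_phi: "alg_iso G K' K M \<phi>"
proof -
  have "bij_betw \<phi> (Hsp G) (Hsp G)"
    by (rule bij_betw_byWitness[where f'="\<lambda>b z. if z \<in> carrier G then b (untwist_G z) else 0"])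
      (auto simp: phi_sigma_eq Hsp_def untwist_G_carrier twist_G_carrier untwist_G_twist_G twist_G_untwist_G
        intro!: ext)
  moreover have "\<phi> (\<lambda>z. a z + b z) = (\<lambda>z. \<phi> a z + \<phi> b z)" "\<phi> (\<lambda>z. c * a z) = (\<lambda>z. c * \<phi> a z)"
    for a b c by (auto simp: phi_sigma_eq intro!: ext)
  ultimately show ?thesis unfolding alg_iso_def using phi_mult phi_one by blast
qed

definition T_inv :: "'g \<times> 'g \<Rightarrow> complex" where
  "T_inv = lcomb (K\<times>K) (\<lambda>_. 1) (\<lambda>(u,v). (u \<otimes> inv (\<sigma> v), v))"

lemma finite_K_K: "finite (K\<times>K)"
  using finite_K by simp

lemma T_carrier: "(\<lambda>(u,v). (u \<otimes> \<sigma> v, v)) ` (K\<times>K) \<subseteq> carrier G \<times> carrier G"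
  and T_inv_carrier: "(\<lambda>(u,v). (u \<otimes> inv (\<sigma> v), v)) ` (K\<times>K) \<subseteq> carrier G \<times> carrier G"
  by (auto simp: closure_simps)

lemma T_T_inv: "hmul2 G K M T T_inv = hone2 K"
  unfolding T_sigma_lcomb T_inv_def hmul2_lcomb[OF finite_carrier finite_K_K finite_K_K T_carrier T_inv_carrier]
    hone2_lcomb[OF finite_K]
  by (rule sym, rule lcomb_reindex[where h="\<lambda>(u,v). ((u,v),(ract u (\<sigma> v), v))" and p=fst])
    (auto simp: bas_mult_ok2_def bas_mult2_def bas_mult_ok_def bas_mult_def kpart_mult mpart_mult
      kpart_K mpart_K ract_one closure_simps m_assoc)

lemma T_inv_T: "hmul2 G K M T_inv T = hone2 K"
  unfolding T_sigma_lcomb T_inv_def hmul2_lcomb[OF finite_carrier finite_K_K finite_K_K T_inv_carrier T_carrier]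
    hone2_lcomb[OF finite_K]
  by (rule sym, rule lcomb_reindex[where h="\<lambda>(u,v). ((u,v),(ract u (inv (\<sigma> v)), v))" and p=fst])
    (auto simp: bas_mult_ok2_def bas_mult2_def bas_mult_ok_def bas_mult_def kpart_mult mpart_mult
      kpart_K mpart_K ract_one closure_simps m_assoc)

lemma eps_id_T: "eps_id G K M T = hone K"
proof -
  have "eps_id G K M T = lcomb (K\<times>K) (\<lambda>(u,v). if u = \<one> then 1 else 0) snd"
    unfolding T_sigma_lcomb eps_id_lcomb[OF finite_carrier finite_K_K T_carrier]
    by (rule lcomb_cong) (auto simp: ec_mult closure_simps)
  also have "\<dots> = lcomb {(u,v)\<in>K\<times>K. u = \<one>} (\<lambda>_. 1) snd"
    using lcomb_if_pair[OF finite_K finite_K] by (simp add: case_prod_beta')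
  also have "\<dots> = hone K"
    unfolding hone_lcomb[OF finite_K]
    by (rule sym, rule lcomb_reindex[where h="\<lambda>v. (\<one>, v)" and p=snd]) (auto simp: closure_simps)
  finally show ?thesis .
qed

lemma id_eps_T: "id_eps G K M T = hone K"
proof -
  have "id_eps G K M T = lcomb (K\<times>K) (\<lambda>(u,v). if v = \<one> then 1 else 0) (\<lambda>(u,v). u \<otimes> \<sigma> v)"
    unfolding T_sigma_lcomb id_eps_lcomb[OF finite_carrier finite_K_K T_carrier]
    by (rule lcomb_cong) (auto simp: ec_def kpart_K)
  also have "\<dots> = lcomb {(u,v)\<in>K\<times>K. v = \<one>} (\<lambda>_. 1) (\<lambda>(u,v). u \<otimes> \<sigma> v)"
    using lcomb_if_pair[OF finite_K finite_K] by (simp add: case_prod_beta')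
  also have "\<dots> = hone K"
    unfolding hone_lcomb[OF finite_K]
    by (rule sym, rule lcomb_reindex[where h="\<lambda>u. (u, \<one>)" and p=fst]) (auto simp: closure_simps sigma_one)
  finally show ?thesis .
qed

definition twisted_coprod :: "('g \<Rightarrow> complex) \<Rightarrow> 'g \<times> 'g \<Rightarrow> complex" where
  "twisted_coprod a = lcomb ((K\<times>M)\<times>K) (\<lambda>((u,x),h). a (twist u \<otimes> x))
     (\<lambda>((u,x),h). (ract (u \<otimes> inv h) (inv (\<sigma> h)) \<otimes> (\<sigma> h \<otimes> lact h x \<otimes> inv (\<sigma> (ract h x))), h \<otimes> x))"

lemma tens_map_phi_hDelta:
  assumes a: "a \<in> Hsp G"
  shows "tens_map G \<phi> (hDelta G K' M a) = twisted_coprod a"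
proof -
  define A where "A = (\<lambda>(u,x). a (twist u \<otimes> x))"
  define F where "F = (\<lambda>(u,x). twist u \<otimes> x)"
  define D where "D = (\<lambda>(i,k). coprod_term G K' M (F i) k)"
  have fin: "finite (K\<times>M)" "finite ((K\<times>M)\<times>K')" using finite_K finite_M finite_K' by simp_all
  have F: "F ` (K\<times>M) \<subseteq> carrier G" unfolding F_def by (auto simp: closure_simps)
  have D: "D ` ((K\<times>M)\<times>K') \<subseteq> carrier G \<times> carrier G"
    unfolding D_def F_def by (auto simp: F'.coprod_term_mult closure_simps F'.lact_in F'.M_carrier F'.K_inv)
  have "hDelta G K' M a = lcomb ((K\<times>M)\<times>K') (\<lambda>(i,k). A i) D"
    unfolding D_def
    by (subst Hsp_lcomb_twist[OF a], fold A_def F_def) (rule hDelta_lcomb[OF finite_carrier fin(1) F])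
  then have "tens_map G \<phi> (hDelta G K' M a) = lcomb ((K\<times>M)\<times>K') (\<lambda>(i,k). A i)
      (\<lambda>i. (untwist_G (fst (D i)), untwist_G (snd (D i))))"
    using tens_map_lcomb[where \<psi>=untwist_G, OF finite_carrier fin(2) D phi_bas] by simp
  also have "\<dots> = twisted_coprod a"
    unfolding twisted_coprod_def
    by (rule sym, rule lcomb_reindex_bij[OF bij_betw_map_prod[OF bij_betw_id bij_betw_twist]])
      (auto simp: A_def F_def D_def F'.coprod_term_mult untwist_G_coprod_term_twist untwist_G_twist_mult
        closure_simps)
  finally show ?thesis .
qed

lemma T_hDelta_phi_T_inv:
  assumes a: "a \<in> Hsp G"
  shows "hmul2 G K M (hmul2 G K M T (hDelta G K M (\<phi> a))) T_inv = twisted_coprod a"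
proof -
  define A where "A = (\<lambda>(u,x). a (twist u \<otimes> x))"
  define E where "E = (\<lambda>(u::'g,x::'g). u \<otimes> x)"
  have fin: "finite (K\<times>M)" "finite ((K\<times>M)\<times>K)" using finite_K finite_M by simp_all
  have E: "E ` (K\<times>M) \<subseteq> carrier G" unfolding E_def by (auto simp: closure_simps)
  have D: "(\<lambda>(i,h). coprod_term G K M (E i) h) ` ((K\<times>M)\<times>K) \<subseteq> carrier G \<times> carrier G"
    unfolding E_def by (auto simp: coprod_term_mult closure_simps)
  have Delta_phi: "hDelta G K M (\<phi> a) = lcomb ((K\<times>M)\<times>K) (\<lambda>(i,h). A i) (\<lambda>(i,h). coprod_term G K M (E i) h)"
    by (subst phi_lcomb_K_M[OF a], fold A_def E_def) (rule hDelta_lcomb[OF finite_carrier fin(1) E])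
  have twisted_coprod_A: "twisted_coprod a = lcomb ((K\<times>M)\<times>K) (\<lambda>(i,h). A i)
     (\<lambda>((u,x),h). (ract (u \<otimes> inv h) (inv (\<sigma> h)) \<otimes> (\<sigma> h \<otimes> lact h x \<otimes> inv (\<sigma> (ract h x))), h \<otimes> x))"
    unfolding twisted_coprod_def A_def by (rule lcomb_cong) auto
  show ?thesis
    unfolding T_sigma_lcomb T_inv_def Delta_phi twisted_coprod_A
      hmul2_hmul2_lcomb[OF finite_carrier finite_K_K fin(2) finite_K_K T_carrier D T_inv_carrier]
  proof (rule sym, rule lcomb_reindex[where p="\<lambda>j. snd (fst j)"
        and h="\<lambda>((u,x),h). (((ract (u \<otimes> inv h) (inv (\<sigma> h)), h), ((u,x),h)),
          (ract (ract (u \<otimes> inv h) (inv (\<sigma> h))) (\<sigma> h \<otimes> lact h x), ract h x))"], goal_cases)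
    case (1 i) then show ?case
      by (auto simp: E_def coprod_term_mult bas_mult_ok2_def bas_mult_ok_def bas_mult2_def bas_mult_def
          kpart_mult mpart_mult kpart_mult_mult mpart_mult_mult kpart_K mpart_K ract_one ract_ract_inv
          closure_simps)
  next
    case (3 j) then show ?case
      by (auto simp: E_def coprod_term_mult bas_mult_ok2_def bas_mult_ok_def bas_mult2_def bas_mult_def
          kpart_mult mpart_mult kpart_mult_mult mpart_mult_mult kpart_K mpart_K ract_one ract_sigma_eq_iff
          closure_simps)
  next
    case (6 i) then show ?case
      by (auto simp: E_def coprod_term_mult bas_mult2_def bas_mult_def mpart_mult mpart_mult_mult
          mpart_K closure_simps; simp add: closure_simps m_assoc)
  qed auto
qed

definition T_cocycle_value :: "'g \<times> 'g \<times> 'g \<Rightarrow> complex" where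
  "T_cocycle_value = lcomb (K\<times>(K\<times>K)) (\<lambda>_. 1) (\<lambda>(a,h,v). (a \<otimes> (\<sigma> h \<otimes> lact h (\<sigma> v)), h \<otimes> \<sigma> v, v))"

lemma T1_Delta_id_T: "hmul3 G K M (tens_T1 K T) (Delta_id G K M T) = T_cocycle_value"
proof -
  have fin: "finite ((K\<times>K)\<times>K)" using finite_K by simp
  have im1: "(\<lambda>(i,k). (fst ((\<lambda>(u,v). (u \<otimes> \<sigma> v, v)) i), snd ((\<lambda>(u,v). (u \<otimes> \<sigma> v, v)) i), k)) ` ((K\<times>K)\<times>K)
      \<subseteq> carrier G \<times> carrier G \<times> carrier G"
    by (auto simp: closure_simps)
  have im2: "(\<lambda>(i,h). (fst (coprod_term G K M (fst ((\<lambda>(u,v). (u \<otimes> \<sigma> v, v)) i)) h),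
        snd (coprod_term G K M (fst ((\<lambda>(u,v). (u \<otimes> \<sigma> v, v)) i)) h), snd ((\<lambda>(u,v). (u \<otimes> \<sigma> v, v)) i)))
      ` ((K\<times>K)\<times>K) \<subseteq> carrier G \<times> carrier G \<times> carrier G"
    by (auto simp: coprod_term_mult closure_simps)
  show ?thesis
    unfolding T_cocycle_value_def T_sigma_lcomb tens_T1_lcomb[OF finite_K]
      Delta_id_lcomb[OF finite_carrier finite_K_K T_carrier] hmul3_lcomb[OF finite_carrier fin fin im1 im2]
  proof (rule sym, rule lcomb_reindex[where h="\<lambda>(a,h,v). (((a,h),v),((ract a (\<sigma> h) \<otimes> h, v),h))"
        and p="\<lambda>(((a,b),c),_). (a,b,c)"], goal_cases)
    case (1 i) then show ?case
      by (auto simp: coprod_term_mult bas_mult_ok2_def bas_mult_ok_def kpart_mult mpart_mult kpart_K mpart_K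
          ract_one closure_simps; simp add: closure_simps m_assoc)
  next
    case (3 j) then show ?case
      by (auto simp: coprod_term_mult bas_mult_ok2_def bas_mult_ok_def kpart_mult mpart_mult kpart_K mpart_K
          ract_one closure_simps inv_solve_right)
  next
    case (6 i) then show ?case
      by (auto simp: coprod_term_mult bas_mult2_def bas_mult_def kpart_mult mpart_mult kpart_K mpart_K
          closure_simps; simp add: closure_simps m_assoc)
  qed auto
qed

lemma T1_id_Delta_T: "hmul3 G K M (tens_1T K T) (id_Delta G K M T) = T_cocycle_value"
proof -
  have fin: "finite (K\<times>(K\<times>K))" "finite ((K\<times>K)\<times>K)" using finite_K by simp_all
  have im3: "(\<lambda>(k,i). (k, fst ((\<lambda>(u,v). (u \<otimes> \<sigma> v, v)) i), snd ((\<lambda>(u,v). (u \<otimes> \<sigma> v, v)) i))) ` (K\<times>(K\<times>K))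
      \<subseteq> carrier G \<times> carrier G \<times> carrier G"
    by (auto simp: closure_simps)
  have im4: "(\<lambda>(i,h). (fst ((\<lambda>(u,v). (u \<otimes> \<sigma> v, v)) i), fst (coprod_term G K M (snd ((\<lambda>(u,v). (u \<otimes> \<sigma> v, v)) i)) h),
        snd (coprod_term G K M (snd ((\<lambda>(u,v). (u \<otimes> \<sigma> v, v)) i)) h)))
      ` ((K\<times>K)\<times>K) \<subseteq> carrier G \<times> carrier G \<times> carrier G"
    by (auto simp: coprod_term_def kpart_K mpart_K closure_simps)
  show ?thesis
    unfolding T_cocycle_value_def T_sigma_lcomb tens_1T_lcomb[OF finite_K]
      id_Delta_lcomb[OF finite_carrier finite_K_K T_carrier] hmul3_lcomb[OF finite_carrier fin im3 im4]
  proof (rule sym, rule lcomb_reindex[where h="\<lambda>(a,h,v). ((a,(h,v)),((a, ract h (\<sigma> v) \<otimes> v),v))"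
        and p="\<lambda>(k,_). k"], goal_cases)
    case (1 i) then show ?case
      by (auto simp: coprod_term_def bas_mult_ok2_def bas_mult_ok_def kpart_mult mpart_mult kpart_K mpart_K
          ract_one lact_one closure_simps m_assoc)
  next
    case (3 j) then show ?case
      by (auto simp: coprod_term_def bas_mult_ok2_def bas_mult_ok_def kpart_mult mpart_mult kpart_K mpart_K
          ract_one lact_one closure_simps inv_solve_right)
  next
    case (6 i) then show ?case
      by (auto simp: coprod_term_def bas_mult2_def bas_mult_def kpart_mult mpart_mult kpart_K mpart_K
          lact_one closure_simps sigma_cocycle[symmetric])
  qed auto
qed

end

theorem proposition6:
  fixes G :: "('g,'b) monoid_scheme" and Kp K' M :: "'g set" and \<sigma> :: "'g \<Rightarrow> 'g"
  assumes "group G" and "finite (carrier G)"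
    and "unique_factorization G Kp M" and "unique_factorization G K' M"
    and "\<forall>u\<in>Kp. \<sigma> u \<in> M"
    and "K' = {\<sigma> u \<otimes>\<^bsub>G\<^esub> u | u. u \<in> Kp}"
  shows "quasi_iso G K' Kp M (phi_sigma G Kp M \<sigma>) (T_sigma G Kp \<sigma>)"
proof -
  interpret finite_twisted_factorization G Kp M K' \<sigma>
    using assms by (simp add: finite_twisted_factorization_def finite_twisted_factorization_axioms_def
      twisted_factorization_def twisted_factorization_axioms_def factorization_def factorization_axioms_def)
  have "tens_map G \<phi> (hDelta G K' M a) = hmul2 G Kp M (hmul2 G Kp M T (hDelta G Kp M (\<phi> a))) T_inv"
    if "a \<in> Hsp G" for a
    using that tens_map_phi_hDelta T_hDelta_phi_T_inv by simp
  then show ?thesis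
    unfolding quasi_iso_def
    using alg_iso_phi T_T_inv T_inv_T T1_Delta_id_T T1_id_Delta_T eps_id_T id_eps_T by auto
qed

end
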